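(* Let $t$ be the total number of attribute values. The Depth-First Search Sampling algorithm (stack initialized with a matching starting context $C_V$; repeatedly take the top context $C$, mark it visited, compute the matching unvisited contexts connected to $C$, pop if there are none, otherwise push the one selected by $\mathrm{Exp}^{\epsilon_1}_u$; stop after $n$ contexts are visited or the stack is empty; output $\mathrm{Exp}^{\epsilon_1}_u$ applied to the visited contexts) has computational complexity $\mathcal O(t)$.
   Context: Dataset $D$ over categorical attributes $A_1,\dots,A_m$ with domain sizes $|A_i|$, $t=\sum_i|A_i|$. A context is a binary vector of length $t$ selecting a subset of values per attribute; $D_C$ is its population in $D$. Two contexts are connected if their Hamming distance is $1$ (each context has $t$ connected contexts). A context $C$ is matching if $f_M(D_C,V)=\mathrm{true}$ for a deterministic outlier verification $f_M$ for record $V$ w.r.t. metric $M$. $\mathrm{Exp}^{\epsilon}_u$ is the Exponential mechanism selecting from a set with probability proportional to $\exp(\epsilon u/(2\Delta u))$. The number of samples $n$ is treated as a constant; complexity counts outlier-verification calls and mechanism evaluations. *)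

theory Defs
  imports Complex_Main "HOL-Library.While_Combinator"
begin

text \<open>Contexts are binary vectors of length t, represented as bool lists.
  Two contexts are connected iff their Hamming distance is 1, i.e. one is obtained
  from the other by flipping exactly one bit.\<close>

type_synonym ctxt = "bool list"

definition flip :: "ctxt \<Rightarrow> nat \<Rightarrow> ctxt" where
  "flip C i = C[i := (\<not> C ! i)]"

definition connected :: "ctxt \<Rightarrow> ctxt \<Rightarrow> bool" where
  "connected C C' \<longleftrightarrow> length C = length C' \<and>
     card {i. i < length C \<and> C ! i \<noteq> C' ! i} = 1"

text \<open>State of the DFS sampler: (stack (top = head), visited set, cost counter).
  The cost counter counts outlier-verification calls (calls of the matching
  predicate) and evaluations of the Exponential mechanism.\<close>

type_synonym dfs_state = "ctxt list \<times> ctxt set \<times> nat"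

text \<open>The (randomized) Exponential mechanism is modelled by an arbitrary selection
  function sel, which may depend on the whole current state (stack, visited set) and
  receives the candidate set; quantifying over all such functions covers every
  possible run of the randomized algorithm.\<close>

definition dfs_cond :: "nat \<Rightarrow> dfs_state \<Rightarrow> bool" where
  "dfs_cond n s = (case s of (stk, vis, c) \<Rightarrow> stk \<noteq> [] \<and> card vis < n)"

definition dfs_step ::
  "(ctxt \<Rightarrow> bool) \<Rightarrow> (ctxt list \<Rightarrow> ctxt set \<Rightarrow> ctxt set \<Rightarrow> ctxt)
   \<Rightarrow> dfs_state \<Rightarrow> dfs_state" where
  "dfs_step match sel s = (case s of (stk, vis, c) \<Rightarrow>
     let C = hd stk;
         vis' = insert C vis;
         cands = {C'. connected C C' \<and> C' \<notin> vis' \<and> match C'};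
         calls = length (filter (\<lambda>i. flip C i \<notin> vis') [0..<length C])
     in if cands = {} then (tl stk, vis', c + calls)
        else (sel stk vis' cands # stk, vis', c + calls + 1))"

text \<open>Total cost of the algorithm: the loop, followed by one final evaluation of the
  Exponential mechanism on the visited contexts. None if the loop does not terminate.\<close>

definition dfs_cost ::
  "nat \<Rightarrow> (ctxt \<Rightarrow> bool) \<Rightarrow> (ctxt list \<Rightarrow> ctxt set \<Rightarrow> ctxt set \<Rightarrow> ctxt)
   \<Rightarrow> ctxt \<Rightarrow> nat option" where
  "dfs_cost n match sel CV =
     map_option (\<lambda>(stk, vis, c). c + 1)
       (while_option (dfs_cond n) (dfs_step match sel) ([CV], {}, 0))"

end

theory Submission
  imports Defs
begin

text \<open>One iteration of the loop costs at most t calls of the verification plus one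
  evaluation of the mechanism. A pop step shrinks the stack; a push step adds a context
  that has never been seen before, and at most n + 1 contexts are ever seen because the
  loop stops after n visits. Charging t + 1 to every stack entry and 2(t + 1) to every
  seen context, the accumulated cost stays below 2(t + 1)(n + 1) = O(t).\<close>

lemma finite_lists_of_length: "finite {xs :: 'a::finite list. length xs = t}"
  using finite_lists_length_eq[of "UNIV :: 'a set" t] by simp

lemma dfs_step_cases:
  assumes stk: "stk \<noteq> []" and len: "length (hd stk) = t"
    and sel: "\<forall>stk vis S. finite S \<and> S \<noteq> {} \<longrightarrow> sel stk vis S \<in> S"
  obtains (pop) c' where
      "dfs_step match sel (stk, vis, c) = (tl stk, insert (hd stk) vis, c')" "c' \<le> c + t"
  | (push) x c' where
      "dfs_step match sel (stk, vis, c) = (x # stk, insert (hd stk) vis, c')"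
      "x \<notin> insert (hd stk) vis" "length x = t" "c' \<le> c + t + 1"
proof -
  define vis' where "vis' = insert (hd stk) vis"
  define cands where "cands = {C'. connected (hd stk) C' \<and> C' \<notin> vis' \<and> match C'}"
  define calls where "calls = length (filter (\<lambda>i. flip (hd stk) i \<notin> vis') [0..<length (hd stk)])"
  have step: "dfs_step match sel (stk, vis, c) =
      (if cands = {} then (tl stk, vis', c + calls)
       else (sel stk vis' cands # stk, vis', c + calls + 1))"
    by (simp add: dfs_step_def Let_def vis'_def cands_def calls_def)
  have "calls \<le> length [0..<length (hd stk)]"
    unfolding calls_def by (rule length_filter_le)
  then have calls: "calls \<le> t" using len by simp
  show thesis
  proof (cases "cands = {}")
    case True
    then show thesis
      using step calls by (intro pop[of "c + calls"]) (simp_all add: vis'_def)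
  next
    case False
    define x where "x = sel stk vis' cands"
    have "cands \<subseteq> {xs. length xs = t}"
      using len by (auto simp: cands_def connected_def)
    then have "finite cands"
      using finite_lists_of_length finite_subset by blast
    with False sel have "x \<in> cands" by (simp add: x_def)
    then have "x \<notin> vis'" "length x = t"
      using len by (simp_all add: cands_def connected_def)
    then show thesis
      using False step calls by (intro push[of x "c + calls + 1"]) (simp_all add: x_def vis'_def)
  qed
qed

definition dfs_invariant :: "nat \<Rightarrow> nat \<Rightarrow> dfs_state \<Rightarrow> bool" where
  "dfs_invariant n t = (\<lambda>(stk, vis, c).
     (\<forall>C\<in>set stk. length C = t) \<and> set (tl stk) \<subseteq> vis \<and> finite vis \<and> card vis \<le> n \<and>
     c + (t + 1) * (length stk + 1) \<le> 2 * (t + 1) * card (vis \<union> set stk))"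

definition dfs_measure :: "nat \<Rightarrow> dfs_state \<Rightarrow> nat" where
  "dfs_measure n = (\<lambda>(stk, vis, c). 2 * (n + 1 - card (vis \<union> set stk)) + length stk)"

lemma dfs_step_invariant_measure:
  assumes inv: "dfs_invariant n t s" and cond: "dfs_cond n s"
    and sel: "\<forall>stk vis S. finite S \<and> S \<noteq> {} \<longrightarrow> sel stk vis S \<in> S"
  shows "dfs_invariant n t (dfs_step match sel s) \<and>
         dfs_measure n (dfs_step match sel s) < dfs_measure n s"
proof -
  obtain stk vis c where s: "s = (stk, vis, c)" by (cases s)
  have stk: "stk \<noteq> []" and lt: "card vis < n"
    using cond by (auto simp: dfs_cond_def s)
  have lens: "\<forall>C\<in>set stk. length C = t" and tl: "set (tl stk) \<subseteq> vis" and fin: "finite vis"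
    and pot: "c + (t + 1) * (length stk + 1) \<le> 2 * (t + 1) * card (vis \<union> set stk)"
    using inv by (auto simp: dfs_invariant_def s)
  define vis' where "vis' = insert (hd stk) vis"
  have seen: "vis \<union> set stk = vis'"
    using tl stk by (cases stk) (auto simp: vis'_def)
  have vis': "finite vis'" "card vis' \<le> n"
    using fin lt by (auto simp: vis'_def card_insert_if)
  have "length (hd stk) = t" using lens stk by simp
  from stk this sel show ?thesis
  proof (cases rule: dfs_step_cases[where match = match and vis = vis and c = c])
    case (pop c')
    have seen': "vis' \<union> set (tl stk) = vis'" using tl by (auto simp: vis'_def)
    have "length stk = length (tl stk) + 1" using stk by simp
    then have "c' + (t + 1) * (length (tl stk) + 1) \<le> 2 * (t + 1) * card (vis' \<union> set (tl stk))"
      using pot pop(2) seen seen' by (simp add: algebra_simps)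
    moreover have "set (tl (tl stk)) \<subseteq> vis'"
      using tl by (cases "tl stk") (auto simp: vis'_def)
    moreover have "\<forall>C\<in>set (tl stk). length C = t"
      using lens by (cases stk) auto
    moreover have "length (tl stk) < length stk" using stk by simp
    ultimately show ?thesis
      using pop(1) vis' seen seen'
      by (simp add: dfs_invariant_def dfs_measure_def s vis'_def[symmetric])
  next
    case (push x c')
    have seen': "vis' \<union> set (x # stk) = insert x vis'" using seen by auto
    have card': "card (insert x vis') = card vis' + 1"
      using push(2) vis' by (simp add: vis'_def)
    have "c' + (t + 1) * (length (x # stk) + 1) \<le> 2 * (t + 1) * card (vis' \<union> set (x # stk))"
      using pot push(4) seen seen' card' by (simp add: algebra_simps)
    moreover have "set stk \<subseteq> vis'" using seen by auto
    moreover have "Suc n - card vis' = Suc (n - card vis')" using vis' by (simp add: Suc_diff_le)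
    ultimately show ?thesis
      using push(1,3) lens vis' seen seen' card'
      by (simp add: dfs_invariant_def dfs_measure_def s vis'_def[symmetric])
  qed
qed

lemma dfs_cost_le:
  assumes len: "length CV = t"
    and sel: "\<forall>stk vis S. finite S \<and> S \<noteq> {} \<longrightarrow> sel stk vis S \<in> S"
  shows "\<exists>k. dfs_cost n match sel CV = Some k \<and> k \<le> 2 * (t + 1) * (n + 1) + 1"
proof -
  have init: "dfs_invariant n t ([CV], {}, 0)"
    using len by (simp add: dfs_invariant_def)
  note step = dfs_step_invariant_measure[OF _ _ sel, where match = match]
  obtain s where loop: "while_option (dfs_cond n) (dfs_step match sel) ([CV], {}, 0) = Some s"
    using measure_while_option_Some[where f = "dfs_measure n", OF step init] by blast
  obtain stk vis c where s: "s = (stk, vis, c)" by (cases s)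
  have "dfs_invariant n t s"
    using while_option_rule[where P = "dfs_invariant n t", OF _ loop init] step by blast
  then have fin: "finite vis" and card: "card vis \<le> n" and tl: "set (tl stk) \<subseteq> vis"
    and pot: "c + (t + 1) * (length stk + 1) \<le> 2 * (t + 1) * card (vis \<union> set stk)"
    by (auto simp: dfs_invariant_def s)
  have "vis \<union> set stk \<subseteq> insert (hd stk) vis" using tl by (cases stk) auto
  then have "card (vis \<union> set stk) \<le> card (insert (hd stk) vis)"
    using fin by (intro card_mono) auto
  also have "\<dots> \<le> n + 1" using fin card by (simp add: card_insert_if)
  finally have "2 * (t + 1) * card (vis \<union> set stk) \<le> 2 * (t + 1) * (n + 1)"
    by (rule mult_le_mono2)
  with pot have "c \<le> 2 * (t + 1) * (n + 1)" by linarith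
  moreover have "dfs_cost n match sel CV = Some (c + 1)"
    by (simp add: dfs_cost_def loop s)
  ultimately show ?thesis by simp
qed

theorem theorem9:
  fixes n :: nat
  shows "\<exists>c::real. \<forall>t::nat. t \<ge> 1 \<longrightarrow>
           (\<forall>match sel CV.
              length CV = t \<longrightarrow> match CV \<longrightarrow>
              (\<forall>stk vis S. finite S \<and> S \<noteq> {} \<longrightarrow> sel stk vis S \<in> S) \<longrightarrow>
              (\<exists>k. dfs_cost n match sel CV = Some k \<and> real k \<le> c * real t))"
proof (intro exI[of _ "4 * real n + 5"] allI impI)
  fix t :: nat and match :: "ctxt \<Rightarrow> bool" and CV :: ctxt
    and sel :: "ctxt list \<Rightarrow> ctxt set \<Rightarrow> ctxt set \<Rightarrow> ctxt"
  assume t: "t \<ge> 1" and len: "length CV = t"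
    and sel: "\<forall>stk vis S. finite S \<and> S \<noteq> {} \<longrightarrow> sel stk vis S \<in> S"
  obtain k where k: "dfs_cost n match sel CV = Some k" and "k \<le> 2 * (t + 1) * (n + 1) + 1"
    using dfs_cost_le[OF len sel] by blast
  then have "real k \<le> real (2 * (t + 1) * (n + 1) + 1)" by linarith
  also have "\<dots> = 2 * (real t + 1) * (real n + 1) + 1" by (simp add: algebra_simps)
  also have "\<dots> \<le> 2 * (2 * real t) * (real n + 1) + real t"
    using t by (intro add_mono mult_right_mono mult_left_mono) auto
  also have "\<dots> = (4 * real n + 5) * real t" by (simp add: algebra_simps)
  finally show "\<exists>k. dfs_cost n match sel CV = Some k \<and> real k \<le> (4 * real n + 5) * real t"
    using k by blast
qed

end
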